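(* There exists a $9\times 9$ bimagic square whose $81$ entries are pairwise distinct palindromic strings of length $8$ over $\{0,1,2\}$ (read as decimal numbers, leading zeros allowed), with magic sum $S1=99999999$, and such that each of the nine $3\times3$ blocks has entry sum $99999999$.
   Context: A magic square of order $n$ is an $n\times n$ array of numbers in which the sums of the entries of each row, of each column and of each of the two principal diagonals all equal a common value $S1$. It is bimagic if in addition the sums of the squares of the entries of each row, each column and each of the two principal diagonals all equal a common value $S2$. The $3\times3$ blocks are the subarrays with rows $3p+1,\dots,3p+3$ and columns $3q+1,\dots,3q+3$, $p,q\in\{0,1,2\}$. *)

theory Defs
  imports Main
begin

definition dec_val :: "nat list \<Rightarrow> nat" where
  "dec_val ds = foldl (\<lambda>acc d. 10 * acc + d) 0 ds"

definition pal8_012 :: "nat list \<Rightarrow> bool" where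
  "pal8_012 ds \<longleftrightarrow> length ds = 8 \<and> set ds \<subseteq> {0,1,2} \<and> rev ds = ds"

definition magic_sq :: "nat \<Rightarrow> (nat \<Rightarrow> nat \<Rightarrow> nat) \<Rightarrow> nat \<Rightarrow> bool" where
  "magic_sq n A S \<longleftrightarrow>
     (\<forall>i<n. (\<Sum>j<n. A i j) = S) \<and>
     (\<forall>j<n. (\<Sum>i<n. A i j) = S) \<and>
     (\<Sum>i<n. A i i) = S \<and>
     (\<Sum>i<n. A i (n - 1 - i)) = S"

definition bimagic_sq :: "nat \<Rightarrow> (nat \<Rightarrow> nat \<Rightarrow> nat) \<Rightarrow> nat \<Rightarrow> bool" where
  "bimagic_sq n A S1 \<longleftrightarrow> magic_sq n A S1 \<and>
     (\<exists>S2. magic_sq n (\<lambda>i j. (A i j)^2) S2)"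

end

theory Submission
  imports Defs
begin

(* The square is built from the base-3 coordinates of a cell.  Writing a row index
   i < 9 as i = 3a + b and a column index j < 9 as j = 3c + d, the cell (i, j) is
   labelled by (a, b, c, d) in (Z/3)^4.  Four affine maps (Z/3)^4 -> Z/3 give four
   ternary digits; the half-word of these digits is mirrored into a palindrome of
   length 8 over {0,1,2}.  The four maps form an invertible affine map of (Z/3)^4,
   so the 81 palindromes are distinct (an explicit inverse recovers (i, j)).  They are
   chosen so that on every row, column, diagonal and 3x3 block each digit, and each
   pair of digits, is equidistributed; this makes the sums of values and of squared
   values constant. *)

definition mirror :: "nat list \<Rightarrow> nat list" where
  "mirror w = w @ rev w"

lemma pal8_012_mirror:
  assumes "length w = 4" and "set w \<subseteq> {0, 1, 2}"
  shows "pal8_012 (mirror w)"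
  using assms by (auto simp: pal8_012_def mirror_def)

text \<open>The decimal value of a mirrored word of length 4 is a fixed linear form in its
  digits; the coefficients are the values of the palindromic digit pairs.\<close>
lemma dec_val_mirror4:
  "dec_val (mirror [a, b, c, d]) = 10000001 * a + 1000010 * b + 100100 * c + 11000 * d"
  by (simp add: mirror_def dec_val_def algebra_simps)

lemma mirror_inj:
  assumes "mirror u = mirror w" and "length u = length w"
  shows "u = w"
proof -
  have "take (length u) (mirror u) = take (length w) (mirror w)"
    using assms by simp
  then show ?thesis by (simp add: mirror_def)
qed

lemma all_less_3: "(\<forall>i<(3::nat). P i) \<longleftrightarrow> P 0 \<and> P 1 \<and> P 2"
  by (simp add: numeral_eq_Suc All_less_Suc conj_ac)

lemma all_less_9:
  "(\<forall>i<(9::nat). P i) \<longleftrightarrow> P 0 \<and> P 1 \<and> P 2 \<and> P 3 \<and> P 4 \<and> P 5 \<and> P 6 \<and> P 7 \<and> P 8"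
  by (simp add: numeral_eq_Suc All_less_Suc conj_ac)

lemma sum_less_3: "(\<Sum>i<(3::nat). f i) = f 0 + f 1 + (f 2 :: 'a::comm_monoid_add)"
  by (simp add: numeral_eq_Suc lessThan_Suc add.commute add.left_commute)

lemma sum_less_9:
  "(\<Sum>i<(9::nat). f i) = f 0 + f 1 + f 2 + f 3 + f 4 + f 5 + f 6 + f 7 + (f 8 :: 'a::comm_monoid_add)"
  by (simp add: numeral_eq_Suc lessThan_Suc add.commute add.left_commute)

definition affine3 :: "nat \<times> nat \<times> nat \<times> nat \<times> nat \<Rightarrow> nat \<Rightarrow> nat \<Rightarrow> nat" where
  "affine3 coeffs i j = (case coeffs of (\<alpha>, \<beta>, \<gamma>, \<delta>, \<epsilon>) \<Rightarrow>
     (\<alpha> * (i div 3) + \<beta> * (i mod 3) + \<gamma> * (j div 3) + \<delta> * (j mod 3) + \<epsilon>) mod 3)"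

definition half_word :: "nat \<Rightarrow> nat \<Rightarrow> nat list" where
  "half_word i j =
     [affine3 (2, 0, 0, 1, 1) i j, affine3 (0, 1, 1, 0, 2) i j,
      affine3 (2, 2, 1, 2, 1) i j, affine3 (1, 2, 1, 1, 1) i j]"

definition square :: "nat \<Rightarrow> nat \<Rightarrow> nat list" where
  "square i j = mirror (half_word i j)"

definition entry_value :: "nat \<Rightarrow> nat \<Rightarrow> nat" where
  "entry_value i j =
     10000001 * affine3 (2, 0, 0, 1, 1) i j + 1000010 * affine3 (0, 1, 1, 0, 2) i j +
     100100 * affine3 (2, 2, 1, 2, 1) i j + 11000 * affine3 (1, 2, 1, 1, 1) i j"

definition cell_of :: "nat list \<Rightarrow> nat \<times> nat" where
  "cell_of x =
     (3 * ((x!0 + 2 * x!2 + x!3 + 2) mod 3) + (2 * x!1 + 2 * x!2 + 2 * x!3 + 1) mod 3,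
      3 * ((2 * x!1 + x!2 + x!3) mod 3) + (2 * x!0 + 2 * x!2 + x!3 + 1) mod 3)"

lemma affine3_less_3: "affine3 coeffs i j < 3"
  by (simp add: affine3_def split: prod.split)

lemma length_half_word: "length (half_word i j) = 4"
  by (simp add: half_word_def)

lemma square_pal8_012: "pal8_012 (square i j)"
proof -
  have "\<forall>x \<in> set (half_word i j). x < 3"
    by (simp add: half_word_def affine3_less_3)
  then have "set (half_word i j) \<subseteq> {0, 1, 2}"
    by auto
  with length_half_word show ?thesis
    unfolding square_def by (rule pal8_012_mirror)
qed

lemma dec_val_square: "dec_val (square i j) = entry_value i j"
  by (simp add: square_def half_word_def dec_val_mirror4 entry_value_def)

lemma cell_of_half_word: "\<forall>i<9. \<forall>j<9. cell_of (half_word i j) = (i, j)"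
  unfolding all_less_9 by (simp add: cell_of_def half_word_def affine3_def)

lemma square_distinct:
  "\<forall>i<9. \<forall>j<9. \<forall>k<9. \<forall>l<9. square i j = square k l \<longrightarrow> i = k \<and> j = l"
proof (intro allI impI)
  fix i j k l :: nat
  assume bounds: "i < 9" "j < 9" "k < 9" "l < 9" and eq: "square i j = square k l"
  have "half_word i j = half_word k l"
    using eq unfolding square_def by (rule mirror_inj) (simp only: length_half_word)
  then have "(i, j) = (k, l)"
    using cell_of_half_word bounds by metis
  then show "i = k \<and> j = l" by simp
qed

lemma entry_value_magic: "magic_sq 9 entry_value 99999999"
  unfolding magic_sq_def all_less_9 sum_less_9 by (simp add: entry_value_def affine3_def)

lemma entry_value_squared_magic: "magic_sq 9 (\<lambda>i j. (entry_value i j)^2) 1717172174949495"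
  unfolding magic_sq_def all_less_9 sum_less_9 by (simp add: entry_value_def affine3_def)

lemma entry_value_blocks: "\<forall>p<3. \<forall>q<3. (\<Sum>i<3. \<Sum>j<3. entry_value (3*p+i) (3*q+j)) = 99999999"
  unfolding all_less_3 sum_less_3 by (simp add: entry_value_def affine3_def)

lemma bimagic_sqI:
  assumes "magic_sq n A S1" and "magic_sq n (\<lambda>i j. (A i j)^2) S2"
  shows "bimagic_sq n A S1"
  unfolding bimagic_sq_def using assms by blast

theorem mainTheorem6:
  shows "\<exists>M :: nat \<Rightarrow> nat \<Rightarrow> nat list.
    (\<forall>i<9. \<forall>j<9. pal8_012 (M i j)) \<and>
    (\<forall>i<9. \<forall>j<9. \<forall>k<9. \<forall>l<9. M i j = M k l \<longrightarrow> i = k \<and> j = l) \<and>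
    bimagic_sq 9 (\<lambda>i j. dec_val (M i j)) 99999999 \<and>
    (\<forall>p<3. \<forall>q<3. (\<Sum>i<3. \<Sum>j<3. dec_val (M (3*p+i) (3*q+j))) = 99999999)"
proof (intro exI[of _ square] conjI)
  show "\<forall>i<9. \<forall>j<9. pal8_012 (square i j)"
    using square_pal8_012 by blast
  show "\<forall>i<9. \<forall>j<9. \<forall>k<9. \<forall>l<9. square i j = square k l \<longrightarrow> i = k \<and> j = l"
    by (rule square_distinct)
  show "bimagic_sq 9 (\<lambda>i j. dec_val (square i j)) 99999999"
    unfolding dec_val_square
    using entry_value_magic entry_value_squared_magic by (rule bimagic_sqI)
  show "\<forall>p<3. \<forall>q<3. (\<Sum>i<3. \<Sum>j<3. dec_val (square (3*p+i) (3*q+j))) = 99999999"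
    unfolding dec_val_square by (rule entry_value_blocks)
qed

end
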